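(* Consider an iteration of the sig-cGA optimizing $\mathrm{DLB}$ in which the current frequency vector $\tau$ lies in $\{\frac12,1-\frac1n\}^n$. Then for every $i\in[1..n]$, a $1$ is appended to the history $H_i$ in this iteration (i.e., the winner $z$ has $z_i=1$) with probability at least $\tau_i$.
   Context: Let $n$ be an even positive integer. For $x\in\{0,1\}^n$ consider the blocks $(x_{2\ell+1},x_{2\ell+2})$, $\ell=0,\dots,\frac n2-1$. If $x\neq(1,\dots,1)$, let $m$ be the smallest $\ell$ with $x_{2\ell+1}\neq 1$ or $x_{2\ell+2}\neq 1$, and define $\mathrm{DLB}(x)=2m+1$ if $x_{2m+1}+x_{2m+2}=0$ and $\mathrm{DLB}(x)=2m$ if $x_{2m+1}+x_{2m+2}=1$; set $\mathrm{DLB}(1,\dots,1)=n$. In an iteration of the sig-cGA with current frequency vector $\tau$, two individuals $x,y$ are sampled independently, each bit $j$ being $1$ independently with probability $\tau_j$; the winner $z$ is the one with larger $\mathrm{DLB}$-value (chosen uniformly at random in case of a tie); then for each $i$ the bit $z_i$ is appended to the history $H_i$ (after which the frequencies are possibly updated). *)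

theory Defs
  imports "HOL-Probability.Probability"
begin

text \<open>Bit strings of length n are modelled as functions x :: nat \<Rightarrow> bool, bit j (1-based,
  j \<in> {1..n}) being x j; True encodes 1. Bits outside {1..n} are fixed to False.\<close>

definition DLB :: "nat \<Rightarrow> (nat \<Rightarrow> bool) \<Rightarrow> nat" where
  "DLB n x =
    (if (\<forall>j\<in>{1..n}. x j) then n
     else (let m = (LEAST l. \<not> x (2*l+1) \<or> \<not> x (2*l+2)) in
           if \<not> x (2*m+1) \<and> \<not> x (2*m+2) then 2*m+1 else 2*m))"

definition sample :: "nat \<Rightarrow> (nat \<Rightarrow> real) \<Rightarrow> (nat \<Rightarrow> bool) pmf" where
  "sample n \<tau> = Pi_pmf {1..n} False (\<lambda>j. bernoulli_pmf (\<tau> j))"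

definition winner :: "nat \<Rightarrow> (nat \<Rightarrow> bool) \<Rightarrow> (nat \<Rightarrow> bool) \<Rightarrow> (nat \<Rightarrow> bool) pmf" where
  "winner n x y =
    (if DLB n y < DLB n x then return_pmf x
     else if DLB n x < DLB n y then return_pmf y
     else map_pmf (\<lambda>b. if b then x else y) (bernoulli_pmf (1/2)))"

definition sigcga_winner :: "nat \<Rightarrow> (nat \<Rightarrow> real) \<Rightarrow> (nat \<Rightarrow> bool) pmf" where
  "sigcga_winner n \<tau> =
    bind_pmf (sample n \<tau>) (\<lambda>x. bind_pmf (sample n \<tau>) (\<lambda>y. winner n x y))"

end

theory Submission
  imports Defs
begin

text \<open>Fix the block b containing bit i, let j be the other bit of that block, and split each of the two
  sampled individuals into its bits i, j and the remaining bits. Once the remaining bits are fixed,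
  the DLB-value of an individual, as a function of its bits at i and j, is either a constant below
  2b (an earlier block already contains a zero) or is decided by block b: 2b+1 for 00, 2b for 01 and
  10, and at least 2b+2 for 11. If one of the two individuals is of the first kind, bit i of the
  winner is distributed exactly like a fresh sample, with mean p = \<tau> i. If both are of the second
  kind, the mean is p + p(1-p)(q - (1-q)^2) with q = \<tau> j, and (1-q)^2 \<le> q holds for
  q \<in> {1/2, 1 - 1/n}.\<close>

lemma obtain_first_zero:
  fixes x :: "nat \<Rightarrow> bool"
  assumes "1 \<le> k" "\<not> x k"
  obtains k0 where "k0 \<in> {1..k}" "\<not> x k0" "\<forall>k'\<in>{1..<k0}. x k'"
proof -
  have "\<exists>k0. (1 \<le> k0 \<and> \<not> x k0) \<and> (\<forall>k'<k0. \<not> (1 \<le> k' \<and> \<not> x k'))"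
    using assms by (intro exists_least_iff[THEN iffD1]) auto
  then obtain k0 where "1 \<le> k0" "\<not> x k0" "\<forall>k'<k0. 1 \<le> k' \<longrightarrow> x k'"
    by blast
  moreover have "k0 \<le> k"
    using assms calculation by (meson not_le)
  ultimately show ?thesis
    using that by auto
qed

lemma DLB_first_zero:
  assumes "k \<in> {1..n}" "\<not> x k" "\<forall>k'\<in>{1..<k}. x k'" "k \<in> {2*l + 1, 2*l + 2}"
  shows "DLB n x = (if \<not> x (2*l + 1) \<and> \<not> x (2*l + 2) then 2*l + 1 else 2*l)"
proof -
  have least: "(LEAST l'. \<not> x (2*l' + 1) \<or> \<not> x (2*l' + 2)) = l"
  proof (rule Least_equality)
    show "\<not> x (2*l + 1) \<or> \<not> x (2*l + 2)"
      using assms(2,4) by auto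
    show "l \<le> l'" if "\<not> x (2*l' + 1) \<or> \<not> x (2*l' + 2)" for l'
    proof (rule ccontr)
      assume "\<not> l \<le> l'"
      then have "2*l' + 1 \<in> {1..<k}" "2*l' + 2 \<in> {1..<k}"
        using assms(4) by auto
      then show False
        using assms(3) that by blast
    qed
  qed
  have not_all_ones: "\<not> (\<forall>j\<in>{1..n}. x j)"
    using assms(1,2) by blast
  show ?thesis
    unfolding DLB_def Let_def least if_not_P[OF not_all_ones] ..
qed

lemma DLB_zero_in_prefix:
  assumes "2*b \<le> n" "k \<in> {1..2*b}" "\<not> x k" "\<forall>k'\<in>{1..2*b}. y k' = x k'"
  shows "DLB n y = DLB n x" and "DLB n x < 2*b"
proof -
  obtain k0 where k0: "k0 \<in> {1..k}" "\<not> x k0" "\<forall>k'\<in>{1..<k0}. x k'"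
    using assms(2,3) obtain_first_zero[of k x] by auto
  define l where "l = (k0 - 1) div 2"
  have block: "k0 \<in> {2*l + 1, 2*l + 2}"
    using k0(1) unfolding l_def by auto
  have "2*l + 2 \<le> 2*b"
    using k0(1) assms(2) unfolding l_def by auto presburger
  then have y_first_zero: "\<not> y k0" "\<forall>k'\<in>{1..<k0}. y k'"
    using k0 assms(2,4) by auto
  have "DLB n x = (if \<not> x (2*l + 1) \<and> \<not> x (2*l + 2) then 2*l + 1 else 2*l)"
    using k0 assms(1,2) block by (intro DLB_first_zero) auto
  moreover have "DLB n y = (if \<not> y (2*l + 1) \<and> \<not> y (2*l + 2) then 2*l + 1 else 2*l)"
    using k0 assms(1,2) block y_first_zero by (intro DLB_first_zero) auto
  ultimately show "DLB n y = DLB n x" and "DLB n x < 2*b"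
    using \<open>2*l + 2 \<le> 2*b\<close> assms(4) by auto
qed

lemma DLB_first_block_with_zero:
  assumes "2*b + 2 \<le> n" "\<forall>k\<in>{1..2*b}. x k" "\<not> (x (2*b + 1) \<and> x (2*b + 2))"
  shows "DLB n x = (if \<not> x (2*b + 1) \<and> \<not> x (2*b + 2) then 2*b + 1 else 2*b)"
proof (rule DLB_first_zero)
  define k0 where "k0 = (if x (2*b + 1) then 2*b + 2 else 2*b + 1)"
  show "k0 \<in> {1..n}" "\<not> x k0" "\<forall>k'\<in>{1..<k0}. x k'" "k0 \<in> {2*b + 1, 2*b + 2}"
    using assms unfolding k0_def by (auto simp: less_Suc_eq)
qed

lemma DLB_ge_if_prefix_ones:
  assumes "even m" "m \<le> n" "\<forall>k\<in>{1..m}. x k"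
  shows "m \<le> DLB n x"
proof (cases "\<forall>k\<in>{1..n}. x k")
  case True
  then show ?thesis
    using assms(2) by (simp add: DLB_def)
next
  case False
  then obtain k where "k \<in> {1..n}" "\<not> x k"
    by blast
  then obtain k0 where k0: "k0 \<in> {1..k}" "\<not> x k0" "\<forall>k'\<in>{1..<k0}. x k'"
    using obtain_first_zero[of k x] by auto
  define l where "l = (k0 - 1) div 2"
  have "m < k0"
    using k0(1,2) assms(3) by (meson atLeastAtMost_iff not_le)
  then have "m \<le> 2*l"
    using assms(1) unfolding l_def by presburger
  have "k0 \<in> {2*l + 1, 2*l + 2}"
    using k0(1) unfolding l_def by auto
  moreover have "k0 \<in> {1..n}"
    using k0(1) \<open>k \<in> {1..n}\<close> by auto
  ultimately show ?thesis
    using DLB_first_zero[OF _ k0(2,3)] \<open>m \<le> 2*l\<close> by fastforce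
qed

definition decided_before_block :: "nat \<Rightarrow> (bool \<Rightarrow> bool \<Rightarrow> nat) \<Rightarrow> bool" where
  "decided_before_block b d \<longleftrightarrow> (\<exists>D < 2*b. \<forall>a c. d a c = D)"

definition decided_in_block :: "nat \<Rightarrow> (bool \<Rightarrow> bool \<Rightarrow> nat) \<Rightarrow> bool" where
  "decided_in_block b d \<longleftrightarrow>
    d False False = 2*b + 1 \<and> d True False = 2*b \<and> d False True = 2*b \<and> 2*b + 2 \<le> d True True"

lemma DLB_decided_before_or_in_block:
  fixes r :: "nat \<Rightarrow> bool"
  assumes "2*b + 2 \<le> n" "{i, j} = {2*b + 1, 2*b + 2}"
  defines "d \<equiv> \<lambda>a c. DLB n (r(j := c, i := a))"
  shows "decided_before_block b d \<or> decided_in_block b d"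
proof (cases "\<forall>k\<in>{1..2*b}. r k")
  case False
  then obtain k where k: "k \<in> {1..2*b}" "\<not> r k"
    by blast
  have "d a c = DLB n r" for a c
    unfolding d_def using assms(1,2) k by (intro DLB_zero_in_prefix(1)) (auto simp: doubleton_eq_iff)
  moreover have "DLB n r < 2*b"
    using assms(1) k by (intro DLB_zero_in_prefix(2)[of b n k r r]) auto
  ultimately have "decided_before_block b d"
    unfolding decided_before_block_def by blast
  then show ?thesis ..
next
  case True
  then have ones: "\<forall>k\<in>{1..2*b}. (r(j := c, i := a)) k" for a c
    using assms(2) by (auto simp: doubleton_eq_iff)
  have block_bits:
    "(r(j := c, i := a)) (2*b + 1) \<and> (r(j := c, i := a)) (2*b + 2) \<longleftrightarrow> a \<and> c"
    "\<not> (r(j := c, i := a)) (2*b + 1) \<and> \<not> (r(j := c, i := a)) (2*b + 2) \<longleftrightarrow> \<not> a \<and> \<not> c"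
    for a c
    using assms(2) by (auto simp: doubleton_eq_iff)
  have "d a c = (if \<not> a \<and> \<not> c then 2*b + 1 else 2*b)" if "\<not> (a \<and> c)" for a c
    unfolding d_def using DLB_first_block_with_zero[OF assms(1) ones] that
    by (simp only: block_bits)
  moreover have "2*b + 2 \<le> d True True"
    unfolding d_def using assms ones by (intro DLB_ge_if_prefix_ones) (auto simp: doubleton_eq_iff le_Suc_eq)
  ultimately have "decided_in_block b d"
    unfolding decided_in_block_def by auto
  then show ?thesis ..
qed

lemma measure_pmf_prob_bind:
  "measure_pmf.prob (bind_pmf M f) A = measure_pmf.expectation M (\<lambda>x. measure_pmf.prob (f x) A)"
  unfolding measure_pmf_bind
  using measurable_measure_pmf[of f]
  by (intro measure_pmf.measure_bind[where N="count_space UNIV"]) (simp_all add: measurable_cong_sets)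

lemma measure_pmf_prob_bind_ge:
  assumes "\<And>x. x \<in> set_pmf M \<Longrightarrow> c \<le> measure_pmf.prob (f x) A"
  shows "c \<le> measure_pmf.prob (bind_pmf M f) A"
proof -
  have "measure_pmf.expectation M (\<lambda>_. c) \<le> measure_pmf.expectation M (\<lambda>x. measure_pmf.prob (f x) A)"
    by (intro integral_mono_AE)
       (auto intro!: measure_pmf.integrable_const_bound[where B=1] simp: AE_measure_pmf_iff assms)
  then show ?thesis by (simp add: measure_pmf_prob_bind)
qed

definition bernoulli_mean :: "real \<Rightarrow> (bool \<Rightarrow> real) \<Rightarrow> real" where
  "bernoulli_mean p f = p * f True + (1 - p) * f False"

lemma measure_pmf_prob_bind_bernoulli:
  assumes "0 \<le> p" "p \<le> 1"
  shows "measure_pmf.prob (bind_pmf (bernoulli_pmf p) f) A = bernoulli_mean p (\<lambda>b. measure_pmf.prob (f b) A)"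
  using assms by (simp add: measure_pmf_prob_bind bernoulli_mean_def algebra_simps)

definition duel_bit :: "nat \<Rightarrow> nat \<Rightarrow> bool \<Rightarrow> bool \<Rightarrow> real" where
  "duel_bit v v' a a' =
    (if v' < v then of_bool a else if v < v' then of_bool a' else (of_bool a + of_bool a') / 2)"

lemma prob_winner_bit:
  "measure_pmf.prob (winner n x y) {z. z i} = duel_bit (DLB n x) (DLB n y) (x i) (y i)"
proof -
  have "{b. b} = {True}" "Collect Not = {False}" by auto
  then show ?thesis
    by (auto simp: winner_def duel_bit_def measure_pmf_single vimage_def)
qed

text \<open>The probability that the duel winner has bit i set, once all bits outside the block of i are
  fixed: dx a c is the DLB-value of the first individual when its bit i is a and the other bit of the
  block is c, and dy that of the second.\<close>

definition block_duel_prob ::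
    "real \<Rightarrow> real \<Rightarrow> (bool \<Rightarrow> bool \<Rightarrow> nat) \<Rightarrow> (bool \<Rightarrow> bool \<Rightarrow> nat) \<Rightarrow> real" where
  "block_duel_prob p q dx dy =
    bernoulli_mean p (\<lambda>a. bernoulli_mean q (\<lambda>c. bernoulli_mean p (\<lambda>a'. bernoulli_mean q (\<lambda>c'.
      duel_bit (dx a c) (dy a' c') a a'))))"

lemma block_duel_prob_const:
  assumes "\<And>a c. dx a c = D" "\<And>a c. dy a c = D'"
  shows "block_duel_prob p q dx dy = p"
  using assms
  by (cases D D' rule: linorder_cases)
     (simp_all add: block_duel_prob_def bernoulli_mean_def duel_bit_def algebra_simps add_divide_distrib)

lemma block_duel_prob_less:
  assumes "\<And>a c a' c'. dx a c < dy a' c'"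
  shows "block_duel_prob p q dx dy = p"
proof -
  have "duel_bit (dx a c) (dy a' c') a a' = of_bool a'" for a c a' c'
    using assms[of a c a' c'] by (simp add: duel_bit_def)
  then show ?thesis
    by (simp add: block_duel_prob_def bernoulli_mean_def algebra_simps)
qed

lemma block_duel_prob_greater:
  assumes "\<And>a c a' c'. dy a' c' < dx a c"
  shows "block_duel_prob p q dx dy = p"
proof -
  have "duel_bit (dx a c) (dy a' c') a a' = of_bool a" for a c a' c'
    using assms[of a' c' a c] by (simp add: duel_bit_def)
  then show ?thesis
    by (simp add: block_duel_prob_def bernoulli_mean_def algebra_simps)
qed

lemma block_duel_prob_in_block:
  assumes "decided_in_block b dx" "decided_in_block b dy"
  shows "block_duel_prob p q dx dy = p + p * (1 - p) * (q - (1 - q)^2)"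
proof -
  txt \<open>Only the order of the DLB-values matters, except between two 11-blocks, where both bits i
    are set anyway.\<close>
  define rank :: "bool \<Rightarrow> bool \<Rightarrow> nat" where
    "rank a c = (if a \<and> c then 2 else if a \<or> c then 0 else 1)" for a c
  have "duel_bit (dx a c) (dy a' c') a a' = duel_bit (rank a c) (rank a' c') a a'" for a c a' c'
    using assms by (cases a; cases c; cases a'; cases c')
      (simp_all add: decided_in_block_def duel_bit_def rank_def)
  then show ?thesis
    by (simp add: block_duel_prob_def bernoulli_mean_def duel_bit_def rank_def power2_eq_square
        field_simps)
qed

lemma block_duel_prob_ge:
  assumes "0 \<le> p" "p \<le> 1" "0 \<le> q" "q \<le> 1" "(1 - q)^2 \<le> q"
    and "decided_before_block b dx \<or> decided_in_block b dx"
    and "decided_before_block b dy \<or> decided_in_block b dy"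
  shows "p \<le> block_duel_prob p q dx dy"
proof -
  have in_block_ge: "2*b \<le> d a c" if "decided_in_block b d" for d a c
    using that by (cases a; cases c) (auto simp: decided_in_block_def)
  consider "decided_before_block b dx" "decided_before_block b dy"
    | "decided_before_block b dx" "decided_in_block b dy"
    | "decided_in_block b dx" "decided_before_block b dy"
    | "decided_in_block b dx" "decided_in_block b dy"
    using assms(6,7) by blast
  then show ?thesis
  proof cases
    case 1
    then show ?thesis
      unfolding decided_before_block_def by (metis block_duel_prob_const order_refl)
  next
    case 2
    then have "block_duel_prob p q dx dy = p"
      by (intro block_duel_prob_less)
         (metis decided_before_block_def in_block_ge order.strict_trans2)
    then show ?thesis by simp
  next
    case 3
    then have "block_duel_prob p q dx dy = p"
      by (intro block_duel_prob_greater)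
         (metis decided_before_block_def in_block_ge order.strict_trans2)
    then show ?thesis by simp
  next
    case 4
    have "0 \<le> p * (1 - p) * (q - (1 - q)^2)"
      using assms(1-5) by simp
    then show ?thesis
      using block_duel_prob_in_block[OF 4] by simp
  qed
qed

lemma sample_split_pair:
  assumes "i \<in> {1..n}" "j \<in> {1..n}" "i \<noteq> j"
  shows "sample n \<tau> =
    do {r \<leftarrow> Pi_pmf ({1..n} - {i, j}) False (\<lambda>k. bernoulli_pmf (\<tau> k));
        a \<leftarrow> bernoulli_pmf (\<tau> i);
        c \<leftarrow> bernoulli_pmf (\<tau> j);
        return_pmf (r(j := c, i := a))}"
proof -
  define S where "S = {1..n} - {i, j}"
  have "{1..n} = insert i (insert j S)" "finite S" "i \<notin> insert j S" "j \<notin> S"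
    using assms unfolding S_def by auto
  then have "sample n \<tau> =
    do {a \<leftarrow> bernoulli_pmf (\<tau> i); c \<leftarrow> bernoulli_pmf (\<tau> j);
        r \<leftarrow> Pi_pmf S False (\<lambda>k. bernoulli_pmf (\<tau> k)); return_pmf (r(j := c, i := a))}"
    unfolding sample_def by (simp add: Pi_pmf_insert' bind_assoc_pmf bind_return_pmf)
  then show ?thesis
    unfolding S_def by (simp add: bind_commute_pmf[of "Pi_pmf _ False _"])
qed

lemma sigcga_winner_bit_ge:
  assumes "2*b + 2 \<le> n" "{i, j} = {2*b + 1, 2*b + 2}"
    and bounds: "0 \<le> \<tau> i" "\<tau> i \<le> 1" "0 \<le> \<tau> j" "\<tau> j \<le> 1"
    and "(1 - \<tau> j)^2 \<le> \<tau> j"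
  shows "\<tau> i \<le> measure_pmf.prob (sigcga_winner n \<tau>) {z. z i}"
proof -
  define R where "R = Pi_pmf ({1..n} - {i, j}) False (\<lambda>k. bernoulli_pmf (\<tau> k))"
  define B where "B k = bernoulli_pmf (\<tau> k)" for k
  define d where "d r a c = DLB n (r(j := c, i := a))" for r a c
  have ij: "i \<in> {1..n}" "j \<in> {1..n}" "i \<noteq> j"
    using assms(1,2) by (auto simp: doubleton_eq_iff)
  have "sigcga_winner n \<tau> =
    do {r \<leftarrow> R; r' \<leftarrow> R; a \<leftarrow> B i; c \<leftarrow> B j; a' \<leftarrow> B i; c' \<leftarrow> B j;
        winner n (r(j := c, i := a)) (r'(j := c', i := a'))}"
    unfolding sigcga_winner_def sample_split_pair[OF ij, of \<tau>, folded R_def B_def]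
    by (simp add: bind_assoc_pmf bind_return_pmf bind_commute_pmf[of "B _" R])
  also have "\<tau> i \<le> measure_pmf.prob \<dots> {z. z i}"
  proof (rule measure_pmf_prob_bind_ge, rule measure_pmf_prob_bind_ge)
    fix r r'
    have "\<tau> i \<le> block_duel_prob (\<tau> i) (\<tau> j) (d r) (d r')"
      unfolding d_def using DLB_decided_before_or_in_block[OF assms(1,2)]
      by (intro block_duel_prob_ge bounds assms(7))
    then show "\<tau> i \<le> measure_pmf.prob
        (do {a \<leftarrow> B i; c \<leftarrow> B j; a' \<leftarrow> B i; c' \<leftarrow> B j;
             winner n (r(j := c, i := a)) (r'(j := c', i := a'))}) {z. z i}"
      using bounds ij(3)
      by (simp add: B_def d_def block_duel_prob_def measure_pmf_prob_bind_bernoulli prob_winner_bit)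
  qed
  finally show ?thesis .
qed

lemma border_frequency_bounds:
  assumes "2 \<le> n" "q \<in> {1/2, 1 - 1 / real n}"
  shows "0 \<le> q \<and> q \<le> 1 \<and> (1 - q)^2 \<le> q"
proof -
  have "0 \<le> 1 / real n" "1 / real n \<le> 1/2" "(1 / real n)^2 \<le> 1 / real n"
    using assms(1) by (simp_all add: field_simps power2_eq_square)
  then have "0 \<le> 1 - 1 / real n \<and> 1 - 1 / real n \<le> 1 \<and> (1 - (1 - 1 / real n))^2 \<le> 1 - 1 / real n"
    by simp
  moreover have "0 \<le> (1/2 :: real) \<and> (1/2 :: real) \<le> 1 \<and> (1 - 1/2)^2 \<le> (1/2 :: real)"
    by (simp add: power2_eq_square)
  ultimately show ?thesis
    using assms(2) by blast
qed

theorem corollary22: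
  fixes n :: nat and \<tau> :: "nat \<Rightarrow> real" and i :: nat
  assumes "even n" and "n > 0"
    and "\<forall>j\<in>{1..n}. \<tau> j \<in> {1/2, 1 - 1 / real n}"
    and "i \<in> {1..n}"
  shows "measure_pmf.prob (sigcga_winner n \<tau>) {z. z i} \<ge> \<tau> i"
proof -
  define b where "b = (i - 1) div 2"
  define j where "j = (if odd i then i + 1 else i - 1)"
  have block: "2*b + 2 \<le> n" "{i, j} = {2*b + 1, 2*b + 2}"
    using assms(1,4) unfolding b_def j_def by (auto simp: doubleton_eq_iff) presburger+
  have "2 \<le> n"
    using assms(1,2) by presburger
  have "j \<in> {1..n}"
    using block by (auto simp: doubleton_eq_iff)
  then have "0 \<le> \<tau> i \<and> \<tau> i \<le> 1 \<and> (1 - \<tau> i)^2 \<le> \<tau> i"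
    and "0 \<le> \<tau> j \<and> \<tau> j \<le> 1 \<and> (1 - \<tau> j)^2 \<le> \<tau> j"
    using assms(3,4) border_frequency_bounds[OF \<open>2 \<le> n\<close>] by blast+
  then show ?thesis
    using sigcga_winner_bit_ge[OF block] by blast
qed

end
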